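(* Assume $\lambda_{\max}(L_1)>\lambda_{\max}(L_2)$, that $\lambda_N^1:=\lambda_{\max}(L_1)$ is a simple eigenvalue of $L_1$ with eigenvector $v_N^1$, and that the nodal set $\{x: v_N^1(x)=0\}$ is non-empty. Let $c_1^*>0$ be the largest budget such that for $0\le c<c_1^*$ the optimal largest eigenvalue $\lambda_n^*(c)$ is simple, and let $W^*=\operatorname{diag}(w^* )$ where $w^*$ is an optimal weight at budget $c=c_1^*$. Define $\bar L=\frac{L_1+L_2}{2}-\lambda_N^1 I$, $\tilde L=\frac{L_1-L_2}{2}$ and $Q=\bar L-\tilde L\bar L^\dagger\tilde L$, where $\dagger$ denotes the Moore–Penrose pseudoinverse. Then the matrix $Q+2W^*$ has a zero eigenvalue.
   Context: A multiplex network consists of two layers $G_1,G_2$, simple undirected graphs on $N$ vertices each with Laplacians $L_1,L_2\in\mathbb{R}^{N\times N}$; the $i$-th vertex of $G_1$ is joined by an interlayer edge of weight $w_i\ge0$ to the $i$-th vertex of $G_2$. With $W=\operatorname{diag}(w)$, the multiplex Laplacian is $L(w)=\begin{bmatrix}L_1+W&-W\\-W&L_2+W\end{bmatrix}$. For a budget $c\ge0$, $\lambda_n^*(c)=\min\{\lambda_{\max}(L(w)):w\ge0,\ w^T\boldsymbol 1=c\}$, and a weight attaining this minimum is called optimal. *)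

theory Defs
  imports "Jordan_Normal_Form.Char_Poly"
begin

definition simple_graph :: "nat \<Rightarrow> (nat \<Rightarrow> nat \<Rightarrow> bool) \<Rightarrow> bool" where
  "simple_graph N E \<longleftrightarrow> (\<forall>i<N. \<not> E i i) \<and> (\<forall>i<N. \<forall>j<N. E i j \<longleftrightarrow> E j i)"

definition graph_laplacian :: "nat \<Rightarrow> (nat \<Rightarrow> nat \<Rightarrow> bool) \<Rightarrow> real mat" where
  "graph_laplacian N E = mat N N (\<lambda>(i,j).
      if i = j then real (card {k. k < N \<and> E i k})
      else if E i j then -1 else 0)"

definition multiplex_laplacian :: "nat \<Rightarrow> real mat \<Rightarrow> real mat \<Rightarrow> (nat \<Rightarrow> real) \<Rightarrow> real mat" where
  "multiplex_laplacian N L1 L2 w =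
     (let W = mat_diag N w in four_block_mat (L1 + W) (- W) (- W) (L2 + W))"

definition lambda_max :: "real mat \<Rightarrow> real" where
  "lambda_max A = Max {k. eigenvalue A k}"

definition simple_eigenvalue :: "real mat \<Rightarrow> real \<Rightarrow> bool" where
  "simple_eigenvalue A k \<longleftrightarrow> order k (char_poly A) = 1"

definition admissible_weight :: "nat \<Rightarrow> real \<Rightarrow> (nat \<Rightarrow> real) \<Rightarrow> bool" where
  "admissible_weight N c w \<longleftrightarrow> (\<forall>i<N. 0 \<le> w i) \<and> (\<Sum>i<N. w i) = c"

text \<open>lambda_n^*(c): the minimum (infimum, which is attained) of lambda_max(L(w)).\<close>
definition lambda_star :: "nat \<Rightarrow> real mat \<Rightarrow> real mat \<Rightarrow> real \<Rightarrow> real" where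
  "lambda_star N L1 L2 c =
     Inf {lambda_max (multiplex_laplacian N L1 L2 w) | w. admissible_weight N c w}"

definition optimal_weight :: "nat \<Rightarrow> real mat \<Rightarrow> real mat \<Rightarrow> real \<Rightarrow> (nat \<Rightarrow> real) \<Rightarrow> bool" where
  "optimal_weight N L1 L2 c w \<longleftrightarrow> admissible_weight N c w \<and>
     lambda_max (multiplex_laplacian N L1 L2 w) = lambda_star N L1 L2 c"

definition optimal_simple :: "nat \<Rightarrow> real mat \<Rightarrow> real mat \<Rightarrow> real \<Rightarrow> bool" where
  "optimal_simple N L1 L2 c \<longleftrightarrow> (\<forall>w. optimal_weight N L1 L2 c w \<longrightarrow>
      simple_eigenvalue (multiplex_laplacian N L1 L2 w) (lambda_star N L1 L2 c))"

definition pinv :: "real mat \<Rightarrow> real mat" where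
  "pinv A = (THE X. X \<in> carrier_mat (dim_col A) (dim_row A) \<and>
      A * X * A = A \<and> X * A * X = X \<and>
      transpose_mat (A * X) = A * X \<and> transpose_mat (X * A) = X * A)"

end

theory Submission
  imports Defs
begin

text \<open>
  Let v be an eigenvector of L1 for lam1 = lambda_max L1 with v x0 = 0. For admissible w the
  Rayleigh quotient of L(w) at u = (v, 0) is lam1 + (\<Sum>i. w i * (v i)^2) / |v|^2, so
  lambda_star c \<ge> lam1, and a weight attaining lam1 must satisfy w i * v i = 0 for all i.

  Putting the whole budget c on the interlayer edge at x0 keeps u an eigenvector. The set of c
  for which this weight still has lambda_max = lam1 contains 0 (because lambda_max L2 < lam1),
  is an interval, and is closed, since the quadratic form of L(w) is affine in c. While c < c1
  the weight is optimal and its top eigenvalue is simple, so L(w) has a spectral gap below lam1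
  off the line through u; this gap absorbs a further increase of c. Hence lambda_star c1 = lam1
  and W* v = 0.

  Finally Lbar is negative definite, because lam1 > lambda_max L2, so its pseudoinverse is its
  inverse; from L1 v = lam1 v one gets Ltil v = - Lbar v, whence
  Q v = Lbar v - Ltil (Lbar^-1 (Ltil v)) = 0 and (Q + 2 W*) v = 0.
\<close>

section \<open>Real symmetric matrices\<close>

lemma real_scalar_prod_self_pos:
  fixes u :: "real vec"
  assumes "u \<in> carrier_vec n" and "u \<noteq> 0\<^sub>v n"
  shows "u \<bullet> u > 0"
  using conjugate_square_greater_0_vec[OF assms(1)] assms(2) by simp

lemma real_scalar_prod_self_nonneg:
  fixes u :: "real vec"
  shows "0 \<le> u \<bullet> u"
  using conjugate_square_ge_0_vec[of u] by simp

lemma conjugate_of_real_mat_mult_vec: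
  fixes A :: "real mat" and u :: "complex vec"
  assumes "A \<in> carrier_mat n m" and "u \<in> carrier_vec m"
  shows "conjugate (map_mat complex_of_real A *\<^sub>v u) = map_mat complex_of_real A *\<^sub>v conjugate u"
  by (rule eq_vecI) (use assms in \<open>auto simp: mult_mat_vec_def scalar_prod_def cnj_sum\<close>)

lemma Re_Im_of_real_mat_mult_vec:
  fixes A :: "real mat" and u :: "complex vec"
  assumes "A \<in> carrier_mat n m" and "u \<in> carrier_vec m"
  shows "map_vec Re (map_mat complex_of_real A *\<^sub>v u) = A *\<^sub>v map_vec Re u"
    and "map_vec Im (map_mat complex_of_real A *\<^sub>v u) = A *\<^sub>v map_vec Im u"
  by (rule eq_vecI; use assms in \<open>auto simp: mult_mat_vec_def scalar_prod_def Re_sum Im_sum\<close>)+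

lemma real_symmetric_complex_eigenvalue_real:
  fixes A :: "real mat"
  assumes A: "A \<in> carrier_mat n n" and sym: "transpose_mat A = A"
    and u: "u \<in> carrier_vec n" "u \<noteq> 0\<^sub>v n"
    and Au: "map_mat complex_of_real A *\<^sub>v u = z \<cdot>\<^sub>v u"
  shows "Im z = 0"
proof -
  let ?Ac = "map_mat complex_of_real A"
  have Ac: "?Ac \<in> carrier_mat n n" using A by simp
  have AcT: "transpose_mat ?Ac = ?Ac" using sym by (simp add: map_mat_transpose)
  have cu: "conjugate u \<in> carrier_vec n" using u by simp
  have "z * (conjugate u \<bullet> u) = conjugate u \<bullet> (?Ac *\<^sub>v u)"
    using Au u cu by simp
  also have "\<dots> = (?Ac *\<^sub>v conjugate u) \<bullet> u"
    using transpose_vec_mult_scalar[OF Ac u(1) cu] AcT by simp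
  also have "?Ac *\<^sub>v conjugate u = cnj z \<cdot>\<^sub>v conjugate u"
    using conjugate_of_real_mat_mult_vec[OF A u(1)] Au by (simp add: conjugate_smult_vec)
  finally have "z * (conjugate u \<bullet> u) = cnj z * (conjugate u \<bullet> u)"
    using u cu by simp
  moreover have "conjugate u \<bullet> u \<noteq> 0"
    using conjugate_square_greater_0_vec[OF u(1)] u(2) conjugate_vec_sprod_comm[OF u(1) u(1)]
    by auto
  ultimately have "cnj z = z" by simp
  then show ?thesis by (metis Reals_cnj_iff complex_is_Real_iff)
qed

lemma real_symmetric_eigenvector_exists:
  fixes A :: "real mat"
  assumes A: "A \<in> carrier_mat n n" and sym: "transpose_mat A = A" and n: "0 < n"
  shows "\<exists>u lam. u \<in> carrier_vec n \<and> u \<noteq> 0\<^sub>v n \<and> A *\<^sub>v u = lam \<cdot>\<^sub>v u"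
proof -
  let ?Ac = "map_mat complex_of_real A"
  have Ac: "?Ac \<in> carrier_mat n n" using A by simp
  have "degree (char_poly ?Ac) = n" using degree_monic_char_poly[OF Ac] by simp
  then obtain z where "poly (char_poly ?Ac) z = 0"
    using fundamental_theorem_of_algebra[of "char_poly ?Ac"] n
    by (metis constant_degree neq0_conv)
  then have "eigenvalue ?Ac z" using eigenvalue_root_char_poly[OF Ac] by simp
  then obtain u where u: "u \<in> carrier_vec n" "u \<noteq> 0\<^sub>v n" and Au: "?Ac *\<^sub>v u = z \<cdot>\<^sub>v u"
    using Ac unfolding eigenvalue_def eigenvector_def by auto
  have "Im z = 0" by (rule real_symmetric_complex_eigenvalue_real[OF A sym u Au])
  then have "map_vec Re (z \<cdot>\<^sub>v u) = Re z \<cdot>\<^sub>v map_vec Re u"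
    and "map_vec Im (z \<cdot>\<^sub>v u) = Re z \<cdot>\<^sub>v map_vec Im u"
    by (auto intro!: eq_vecI)
  then have "A *\<^sub>v map_vec Re u = Re z \<cdot>\<^sub>v map_vec Re u" "A *\<^sub>v map_vec Im u = Re z \<cdot>\<^sub>v map_vec Im u"
    using Re_Im_of_real_mat_mult_vec[OF A u(1)] Au by simp_all
  moreover have "map_vec Re u \<noteq> 0\<^sub>v n \<or> map_vec Im u \<noteq> 0\<^sub>v n"
    using u by (auto simp: vec_eq_iff complex_eq_iff)
  ultimately show ?thesis using u(1) by (metis map_carrier_vec)
qed

definition householder_mat :: "nat \<Rightarrow> real vec \<Rightarrow> real mat" where
  "householder_mat n w = mat n n (\<lambda>(i, j). (if i = j then 1 else 0) - 2 / (w \<bullet> w) * w $ i * w $ j)"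

lemma householder_mat_carrier: "householder_mat n w \<in> carrier_mat n n"
  by (simp add: householder_mat_def)

lemma householder_mat_symmetric: "transpose_mat (householder_mat n w) = householder_mat n w"
  by (rule eq_matI) (auto simp: householder_mat_def)

lemma householder_mat_involutive:
  assumes w: "w \<in> carrier_vec n" "w \<noteq> 0\<^sub>v n"
  shows "householder_mat n w * householder_mat n w = 1\<^sub>m n"
proof (rule eq_matI)
  fix i j assume "i < dim_row (1\<^sub>m n)" "j < dim_col (1\<^sub>m n)"
  then have i: "i < n" and j: "j < n" by auto
  define c where "c = 2 / (w \<bullet> w)"
  have ww: "w \<bullet> w = (\<Sum>k<n. w $ k * w $ k)" using w by (simp add: scalar_prod_def atLeast0LessThan)
  have c: "c * c * (w \<bullet> w) = 2 * c"
    using real_scalar_prod_self_pos[OF w] by (simp add: c_def field_simps)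
  have "(householder_mat n w * householder_mat n w) $$ (i, j)
      = (\<Sum>k<n. ((if i = k then 1 else 0) - c * w $ i * w $ k) * ((if k = j then 1 else 0) - c * w $ k * w $ j))"
    using i j by (simp add: householder_mat_def scalar_prod_def atLeast0LessThan c_def)
  also have "\<dots> = (\<Sum>k<n. (if i = k then (if k = j then 1 else 0) else 0))
      - (\<Sum>k<n. if i = k then c * w $ k * w $ j else 0) - (\<Sum>k<n. if k = j then c * w $ i * w $ k else 0)
      + (\<Sum>k<n. c * c * w $ i * w $ j * (w $ k * w $ k))"
  proof -
    have "((if i = k then 1 else 0) - c * w $ i * w $ k) * ((if k = j then 1 else 0) - c * w $ k * w $ j)
        = (if i = k then (if k = j then 1 else 0) else 0) - (if i = k then c * w $ k * w $ j else 0)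
          - (if k = j then c * w $ i * w $ k else 0) + c * c * w $ i * w $ j * (w $ k * w $ k)" for k
      by (auto simp: algebra_simps)
    then show ?thesis by (simp only: sum.distrib sum_subtractf)
  qed
  also have "\<dots> = (if i = j then 1 else 0) - 2 * c * w $ i * w $ j + c * c * w $ i * w $ j * (w \<bullet> w)"
    using i j by (simp add: ww sum_distrib_left)
  also have "c * c * w $ i * w $ j * (w \<bullet> w) = 2 * c * w $ i * w $ j"
    by (subst c[symmetric]) (simp only: ac_simps)
  also have "(if i = j then 1 else 0) - 2 * c * w $ i * w $ j + 2 * c * w $ i * w $ j = 1\<^sub>m n $$ (i, j)"
    using i j by simp
  finally show "(householder_mat n w * householder_mat n w) $$ (i, j) = 1\<^sub>m n $$ (i, j)" .
qed (auto simp: householder_mat_def)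

lemma householder_mat_mult_unit_vec:
  assumes u: "u \<in> carrier_vec n" "u \<bullet> u = 1" and w0: "u - unit_vec n 0 \<noteq> 0\<^sub>v n" and n: "0 < n"
  shows "householder_mat n (u - unit_vec n 0) *\<^sub>v unit_vec n 0 = u"
proof -
  define w where "w = u - unit_vec n 0"
  have w: "w \<in> carrier_vec n" "w \<noteq> 0\<^sub>v n" using u w0 by (simp_all add: w_def)
  have e: "unit_vec n 0 \<in> carrier_vec n" by simp
  have "w \<bullet> w = u \<bullet> u - 2 * u $ 0 + 1"
    using u(1) n unfolding w_def
    by (simp add: minus_scalar_prod_distrib[OF u(1) e] scalar_prod_minus_distrib[OF _ u(1) e]
        comm_scalar_prod[OF e u(1)])
  then have ww: "w \<bullet> w = - 2 * w $ 0" using u(1,2) n by (simp add: w_def)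
  then have c: "2 / (w \<bullet> w) * w $ 0 = -1" using real_scalar_prod_self_pos[OF w] by simp
  show ?thesis
  proof (rule eq_vecI)
    fix i assume "i < dim_vec u"
    then have i: "i < n" using u by simp
    have "(householder_mat n w *\<^sub>v unit_vec n 0) $ i = (if i = 0 then 1 else 0) - 2 / (w \<bullet> w) * w $ i * w $ 0"
      using i n by (simp add: householder_mat_def)
    also have "2 / (w \<bullet> w) * w $ i * w $ 0 = (2 / (w \<bullet> w) * w $ 0) * w $ i"
      by (simp only: ac_simps)
    also have "(if i = 0 then 1 else 0) - (2 / (w \<bullet> w) * w $ 0) * w $ i = (if i = 0 then 1 else 0) + w $ i"
      unfolding c by simp
    also have "\<dots> = u $ i" using i u(1) by (simp add: w_def)
    finally show "(householder_mat n (u - unit_vec n 0) *\<^sub>v unit_vec n 0) $ i = u $ i"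
      unfolding w_def .
  qed (use u in \<open>simp add: householder_mat_def\<close>)
qed

lemma reflection_to_unit_vec_exists:
  fixes u :: "real vec"
  assumes u: "u \<in> carrier_vec n" "u \<bullet> u = 1" and n: "0 < n"
  shows "\<exists>H. H \<in> carrier_mat n n \<and> transpose_mat H = H \<and> H * H = 1\<^sub>m n \<and> H *\<^sub>v unit_vec n 0 = u"
proof (cases "u - unit_vec n 0 = 0\<^sub>v n")
  case True
  then have "u = unit_vec n 0" using u(1) by (auto simp: vec_eq_iff)
  then show ?thesis by (intro exI[of _ "1\<^sub>m n"]) auto
next
  case False
  then show ?thesis
    using householder_mat_carrier householder_mat_symmetric householder_mat_involutive[OF _ False]
      householder_mat_mult_unit_vec[OF u False n] u(1)
    by (intro exI[of _ "householder_mat n (u - unit_vec n 0)"]) auto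
qed

lemma four_block_diag_mult:
  fixes A1 A2 :: "'a::semiring_0 mat"
  assumes "A1 \<in> carrier_mat k k" "A2 \<in> carrier_mat k k" "B1 \<in> carrier_mat m m" "B2 \<in> carrier_mat m m"
  shows "four_block_mat A1 (0\<^sub>m k m) (0\<^sub>m m k) B1 * four_block_mat A2 (0\<^sub>m k m) (0\<^sub>m m k) B2
       = four_block_mat (A1 * A2) (0\<^sub>m k m) (0\<^sub>m m k) (B1 * B2)"
  using assms by (subst mult_four_block_mat[of _ k k _ m _ m _ _ k _ m]) auto

lemma four_block_diag_transpose:
  assumes "A \<in> carrier_mat k k" "B \<in> carrier_mat m m"
  shows "transpose_mat (four_block_mat A (0\<^sub>m k m) (0\<^sub>m m k) B)
       = four_block_mat (transpose_mat A) (0\<^sub>m k m) (0\<^sub>m m k) (transpose_mat B)"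
  using assms by (subst transpose_four_block_mat[of _ k k _ m _ m]) auto

lemma symmetric_first_column_block:
  fixes B :: "real mat"
  assumes B: "B \<in> carrier_mat (Suc m) (Suc m)" and sym: "transpose_mat B = B"
    and Be: "B *\<^sub>v unit_vec (Suc m) 0 = lam \<cdot>\<^sub>v unit_vec (Suc m) 0"
  shows "\<exists>C. C \<in> carrier_mat m m \<and> transpose_mat C = C \<and>
           B = four_block_mat (mat 1 1 (\<lambda>_. lam)) (0\<^sub>m 1 m) (0\<^sub>m m 1) C"
proof -
  have Bij: "B $$ (j, i) = B $$ (i, j)" if "i < Suc m" "j < Suc m" for i j
    using sym B that by (metis carrier_matD index_transpose_mat(1))
  have col0: "B $$ (i, 0) = (if i = 0 then lam else 0)" if "i < Suc m" for i
    using arg_cong[OF Be, of "\<lambda>x. x $ i"] that B by auto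
  define C where "C = mat m m (\<lambda>(i, j). B $$ (Suc i, Suc j))"
  have "transpose_mat C = C"
    unfolding C_def by (rule eq_matI) (simp_all add: Bij[of "Suc _" "Suc _"])
  moreover have "B = four_block_mat (mat 1 1 (\<lambda>_. lam)) (0\<^sub>m 1 m) (0\<^sub>m m 1) C"
  proof (rule eq_matI)
    fix i j assume "i < dim_row (four_block_mat (mat 1 1 (\<lambda>_. lam)) (0\<^sub>m 1 m) (0\<^sub>m m 1) C)"
      "j < dim_col (four_block_mat (mat 1 1 (\<lambda>_. lam)) (0\<^sub>m 1 m) (0\<^sub>m m 1) C)"
    then have ij: "i < Suc m" "j < Suc m" by (simp_all add: C_def)
    show "B $$ (i, j) = four_block_mat (mat 1 1 (\<lambda>_. lam)) (0\<^sub>m 1 m) (0\<^sub>m m 1) C $$ (i, j)"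
      using ij col0 col0[of j] Bij[of 0 j] by (cases i; cases j) (auto simp: C_def)
  qed (use B in \<open>simp_all add: C_def\<close>)
  moreover have "C \<in> carrier_mat m m" by (simp add: C_def)
  ultimately show ?thesis by blast
qed

lemma real_symmetric_deflation:
  fixes A :: "real mat"
  assumes A: "A \<in> carrier_mat (Suc m) (Suc m)" and sym: "transpose_mat A = A"
  shows "\<exists>H lam C. H \<in> carrier_mat (Suc m) (Suc m) \<and> transpose_mat H * H = 1\<^sub>m (Suc m) \<and>
           C \<in> carrier_mat m m \<and> transpose_mat C = C \<and>
           transpose_mat H * A * H = four_block_mat (mat 1 1 (\<lambda>_. lam)) (0\<^sub>m 1 m) (0\<^sub>m m 1) C"
proof -
  obtain u0 lam where u0: "u0 \<in> carrier_vec (Suc m)" "u0 \<noteq> 0\<^sub>v (Suc m)" and Au0: "A *\<^sub>v u0 = lam \<cdot>\<^sub>v u0"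
    using real_symmetric_eigenvector_exists[OF A sym] by auto
  define u where "u = (1 / sqrt (u0 \<bullet> u0)) \<cdot>\<^sub>v u0"
  have pos: "u0 \<bullet> u0 > 0" using real_scalar_prod_self_pos[OF u0] .
  have u: "u \<in> carrier_vec (Suc m)" using u0 by (simp add: u_def)
  have uu: "u \<bullet> u = 1" using u0 pos
    by (simp add: u_def scalar_prod_smult_distrib[of _ "Suc m"] real_sqrt_mult[symmetric])
  have Au: "A *\<^sub>v u = lam \<cdot>\<^sub>v u" using u0 A Au0
    by (simp add: u_def mult_mat_vec smult_smult_assoc mult.commute)
  obtain H where H: "H \<in> carrier_mat (Suc m) (Suc m)" and HT: "transpose_mat H = H"
    and HH: "H * H = 1\<^sub>m (Suc m)" and He: "H *\<^sub>v unit_vec (Suc m) 0 = u"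
    using reflection_to_unit_vec_exists[OF u uu] by auto
  define B where "B = H * A * H"
  have B: "B \<in> carrier_mat (Suc m) (Suc m)" using H A by (simp add: B_def)
  have "transpose_mat B = transpose_mat H * transpose_mat (H * A)"
    unfolding B_def by (rule transpose_mult) (use H A in auto)
  also have "transpose_mat (H * A) = transpose_mat A * transpose_mat H"
    by (rule transpose_mult) (use H A in auto)
  finally have BT: "transpose_mat B = B"
    using H A HT sym by (simp add: B_def assoc_mult_mat[of _ "Suc m" "Suc m" _ "Suc m" _ "Suc m"])
  have Hu: "H *\<^sub>v u = unit_vec (Suc m) 0"
    using He H HH by (metis assoc_mult_mat_vec one_mult_mat_vec unit_vec_carrier zero_less_Suc)
  have "B *\<^sub>v unit_vec (Suc m) 0 = H *\<^sub>v (A *\<^sub>v (H *\<^sub>v unit_vec (Suc m) 0))"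
    using H A by (simp add: B_def assoc_mult_mat_vec[of _ "Suc m" "Suc m" _ "Suc m"])
  also have "\<dots> = lam \<cdot>\<^sub>v unit_vec (Suc m) 0" using He Au Hu H u by (simp add: mult_mat_vec)
  finally obtain C where "C \<in> carrier_mat m m" "transpose_mat C = C"
    "B = four_block_mat (mat 1 1 (\<lambda>_. lam)) (0\<^sub>m 1 m) (0\<^sub>m m 1) C"
    using symmetric_first_column_block[OF B BT] by blast
  then show ?thesis using H HT HH unfolding B_def by (intro exI[of _ H]) auto
qed

lemma orthogonal_conj_deflated:
  fixes H A C Q :: "real mat"
  assumes H: "H \<in> carrier_mat (Suc m) (Suc m)" "transpose_mat H * H = 1\<^sub>m (Suc m)"
    and A: "A \<in> carrier_mat (Suc m) (Suc m)" and C: "C \<in> carrier_mat m m"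
    and HAH: "transpose_mat H * A * H = four_block_mat (mat 1 1 (\<lambda>_. lam)) (0\<^sub>m 1 m) (0\<^sub>m m 1) C"
    and Q: "Q \<in> carrier_mat m m" "transpose_mat Q * Q = 1\<^sub>m m"
  defines "P \<equiv> H * four_block_mat (1\<^sub>m 1) (0\<^sub>m 1 m) (0\<^sub>m m 1) Q"
  shows "P \<in> carrier_mat (Suc m) (Suc m)" and "transpose_mat P * P = 1\<^sub>m (Suc m)"
    and "transpose_mat P * A * P
       = four_block_mat (mat 1 1 (\<lambda>_. lam)) (0\<^sub>m 1 m) (0\<^sub>m m 1) (transpose_mat Q * C * Q)"
proof -
  define R where "R = four_block_mat (1\<^sub>m 1) (0\<^sub>m 1 m) (0\<^sub>m m 1) Q"
  have one: "1\<^sub>m 1 \<in> carrier_mat 1 1" and L: "mat 1 1 (\<lambda>_. lam) \<in> carrier_mat 1 1"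
    and QT: "transpose_mat Q \<in> carrier_mat m m" and HT: "transpose_mat H \<in> carrier_mat (Suc m) (Suc m)"
    using Q(1) H(1) by auto
  have R: "R \<in> carrier_mat (Suc m) (Suc m)"
    using four_block_carrier_mat[OF one Q(1)] by (simp add: R_def)
  have RT: "transpose_mat R = four_block_mat (1\<^sub>m 1) (0\<^sub>m 1 m) (0\<^sub>m m 1) (transpose_mat Q)"
    unfolding R_def using four_block_diag_transpose[OF one Q(1)] by simp
  have PT: "transpose_mat P = transpose_mat R * transpose_mat H"
    unfolding P_def R_def[symmetric] using H(1) R by (simp add: transpose_mult)
  show "P \<in> carrier_mat (Suc m) (Suc m)" unfolding P_def R_def[symmetric] using H(1) R by simp
  have "transpose_mat P * P = transpose_mat R * ((transpose_mat H * H) * R)"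
    unfolding PT unfolding P_def R_def[symmetric] using H(1) HT R
    by (simp add: assoc_mult_mat[of _ "Suc m" "Suc m" _ "Suc m" _ "Suc m"])
  also have "\<dots> = transpose_mat R * R" using H(2) R by simp
  also have "\<dots> = 1\<^sub>m (Suc m)"
    unfolding RT unfolding R_def using Q by (subst four_block_diag_mult[where k=1 and m=m]) auto
  finally show "transpose_mat P * P = 1\<^sub>m (Suc m)" .
  have "transpose_mat P * A * P = transpose_mat R * (transpose_mat H * A * H) * R"
    unfolding PT unfolding P_def R_def[symmetric] using H(1) HT R A
    by (simp add: assoc_mult_mat[of _ "Suc m" "Suc m" _ "Suc m" _ "Suc m"])
  also have "\<dots> = four_block_mat (1\<^sub>m 1 * mat 1 1 (\<lambda>_. lam) * 1\<^sub>m 1) (0\<^sub>m 1 m) (0\<^sub>m m 1) (transpose_mat Q * C * Q)"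
    unfolding HAH RT unfolding R_def four_block_diag_mult[OF one L QT C]
    by (rule four_block_diag_mult) (use L QT C Q(1) in auto)
  finally show "transpose_mat P * A * P
      = four_block_mat (mat 1 1 (\<lambda>_. lam)) (0\<^sub>m 1 m) (0\<^sub>m m 1) (transpose_mat Q * C * Q)"
    by simp
qed

theorem real_symmetric_orthogonally_diagonalizable:
  fixes A :: "real mat"
  assumes "A \<in> carrier_mat n n" and "transpose_mat A = A"
  shows "\<exists>P d. P \<in> carrier_mat n n \<and> transpose_mat P * P = 1\<^sub>m n \<and> transpose_mat P * A * P = mat_diag n d"
  using assms
proof (induction n arbitrary: A)
  case 0
  then show ?case by (intro exI[of _ "1\<^sub>m 0"] exI[of _ "\<lambda>_. 0"]) (auto intro!: eq_matI simp: mat_diag_def)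
next
  case (Suc m)
  obtain H lam C where H: "H \<in> carrier_mat (Suc m) (Suc m)" "transpose_mat H * H = 1\<^sub>m (Suc m)"
    and C: "C \<in> carrier_mat m m" "transpose_mat C = C"
    and HAH: "transpose_mat H * A * H = four_block_mat (mat 1 1 (\<lambda>_. lam)) (0\<^sub>m 1 m) (0\<^sub>m m 1) C"
    using real_symmetric_deflation[OF Suc.prems] by blast
  obtain Q d where Q: "Q \<in> carrier_mat m m" "transpose_mat Q * Q = 1\<^sub>m m"
    and QCQ: "transpose_mat Q * C * Q = mat_diag m d"
    using Suc.IH[OF C] by blast
  note P = orthogonal_conj_deflated[OF H Suc.prems(1) C(1) HAH Q]
  have "four_block_mat (mat 1 1 (\<lambda>_. lam)) (0\<^sub>m 1 m) (0\<^sub>m m 1) (mat_diag m d)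
      = mat_diag (Suc m) (\<lambda>i. if i = 0 then lam else d (i - 1))"
    by (rule eq_matI) (auto simp: mat_diag_def)
  then show ?case using P unfolding QCQ by metis
qed

lemma order_prod_linear_factors:
  "order k (\<Prod>a\<leftarrow>as. [:- a, 1:]) = length (filter ((=) k) as)"
proof (induction as)
  case (Cons a as)
  have "order k (\<Prod>a\<leftarrow>a # as. [:- a, 1:]) = order k [:- a, 1:] + order k (\<Prod>a\<leftarrow>as. [:- a, 1:])"
    unfolding list.map prod_list.Cons by (rule order_mult) (simp only: mult_eq_0_iff prod_list_zero_iff; auto)
  then show ?case using Cons.IH by (simp add: order_linear')
qed simp

lemma mult_mat_vec_uminus:
  fixes A :: "'a::comm_ring_1 mat"
  assumes "A \<in> carrier_mat nr nc" and "x \<in> carrier_vec nc"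
  shows "A *\<^sub>v (- x) = - (A *\<^sub>v x)"
  by (rule eq_vecI) (use assms in auto)

lemma index_mat_diag_mult_vec:
  fixes x :: "'a::comm_semiring_1 vec"
  assumes "x \<in> carrier_vec n" and "i < n"
  shows "(mat_diag n f *\<^sub>v x) $ i = f i * x $ i"
proof -
  have "(mat_diag n f *\<^sub>v x) $ i = (\<Sum>j = 0..<n. (if i = j then f j else 0) * x $ j)"
    using assms by (simp add: mult_mat_vec_def mat_diag_def scalar_prod_def)
  also have "\<dots> = (\<Sum>j = 0..<n. if i = j then f j * x $ j else 0)"
    by (rule sum.cong) auto
  finally show ?thesis using assms by simp
qed

lemma mat_diag_mult_vec_eq_zero:
  fixes v :: "'a::comm_semiring_1 vec"
  assumes v: "v \<in> carrier_vec n" and vanish: "\<forall>i<n. w i * v $ i = 0"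
  shows "mat_diag n w *\<^sub>v v = 0\<^sub>v n"
proof (rule eq_vecI)
  fix i assume "i < dim_vec (0\<^sub>v n :: 'a vec)"
  then show "(mat_diag n w *\<^sub>v v) $ i = 0\<^sub>v n $ i"
    using index_mat_diag_mult_vec[OF v] vanish by simp
qed (simp add: mat_diag_def)

locale orthogonal_diagonalization =
  fixes A :: "real mat" and n :: nat and P :: "real mat" and d :: "nat \<Rightarrow> real"
  assumes A: "A \<in> carrier_mat n n" and P: "P \<in> carrier_mat n n"
    and orthogonal: "transpose_mat P * P = 1\<^sub>m n"
    and diagonal: "transpose_mat P * A * P = mat_diag n d"
begin

lemma transpose_P: "transpose_mat P \<in> carrier_mat n n"
  using P by simp

lemma orthogonal_right: "P * transpose_mat P = 1\<^sub>m n"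
  using mat_mult_left_right_inverse[OF transpose_P P orthogonal] .

lemma A_factorization: "A = P * mat_diag n d * transpose_mat P"
proof -
  have "P * mat_diag n d * transpose_mat P = (P * transpose_mat P) * A * (P * transpose_mat P)"
    unfolding diagonal[symmetric] using A P transpose_P by (simp add: assoc_mult_mat[of _ n n _ n _ n])
  then show ?thesis using orthogonal_right A by simp
qed

lemma char_poly_eq: "char_poly A = (\<Prod>a\<leftarrow>map d [0..<n]. [:- a, 1:])"
proof -
  have "similar_mat A (mat_diag n d)"
    unfolding similar_mat_def similar_mat_wit_def
    by (intro exI[of _ P] exI[of _ "transpose_mat P"])
      (use A P transpose_P orthogonal orthogonal_right A_factorization in \<open>auto simp: Let_def\<close>)
  then have "char_poly A = char_poly (mat_diag n d)" by (rule char_poly_similar)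
  also have "\<dots> = (\<Prod>a\<leftarrow>diag_mat (mat_diag n d). [:- a, 1:])"
    by (rule char_poly_upper_triangular[of _ n]) (auto simp: upper_triangular_def mat_diag_def)
  also have "diag_mat (mat_diag n d) = map d [0..<n]"
    by (simp add: diag_mat_def mat_diag_def)
  finally show ?thesis .
qed

lemma eigenvalue_iff: "eigenvalue A k \<longleftrightarrow> (\<exists>i<n. d i = k)"
  unfolding eigenvalue_root_char_poly[OF A] char_poly_eq
  by (auto simp: poly_prod_list prod_list_zero_iff)

lemma order_char_poly: "order k (char_poly A) = card {i. i < n \<and> d i = k}"
proof -
  have "order k (char_poly A) = length (filter (\<lambda>i. k = d i) [0..<n])"
    unfolding char_poly_eq order_prod_linear_factors by (simp add: filter_map o_def)
  also have "\<dots> = card {i. i < n \<and> d i = k}"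
    by (subst distinct_length_filter) (auto intro: arg_cong[where f = card])
  finally show ?thesis .
qed

lemma lambda_max_eq: "lambda_max A = Max (d ` {..<n})"
proof -
  have "{k. eigenvalue A k} = d ` {..<n}" using eigenvalue_iff by auto
  then show ?thesis unfolding lambda_max_def by simp
qed

lemma lambda_max_attained: "0 < n \<Longrightarrow> \<exists>i<n. d i = lambda_max A"
  using Max_in[of "d ` {..<n}"] unfolding lambda_max_eq by fastforce

lemma le_lambda_max: "i < n \<Longrightarrow> d i \<le> lambda_max A"
  unfolding lambda_max_eq by (intro Max_ge) auto

text \<open>The entries of (transpose_mat P) x are the coordinates of x in the orthonormal eigenbasis
  formed by the columns of P.\<close>

lemma scalar_prod_coords:
  assumes "x \<in> carrier_vec n" "y \<in> carrier_vec n"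
  shows "x \<bullet> y = (transpose_mat P *\<^sub>v x) \<bullet> (transpose_mat P *\<^sub>v y)"
proof -
  have "(transpose_mat P *\<^sub>v x) \<bullet> (transpose_mat P *\<^sub>v y) = x \<bullet> (P *\<^sub>v (transpose_mat P *\<^sub>v y))"
    using transpose_vec_mult_scalar[OF P _ assms(1)] transpose_P assms(2) by simp
  also have "P *\<^sub>v (transpose_mat P *\<^sub>v y) = y"
    using assoc_mult_mat_vec[OF P transpose_P assms(2)] orthogonal_right assms(2) by simp
  finally show ?thesis by simp
qed

lemma mult_vec_coords:
  assumes x: "x \<in> carrier_vec n"
  shows "transpose_mat P *\<^sub>v (A *\<^sub>v x) = mat_diag n d *\<^sub>v (transpose_mat P *\<^sub>v x)"
proof -
  have "A *\<^sub>v x = A *\<^sub>v (P *\<^sub>v (transpose_mat P *\<^sub>v x))"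
    using assoc_mult_mat_vec[OF P transpose_P x] orthogonal_right x by simp
  then show ?thesis
    unfolding diagonal[symmetric] using A P transpose_P x by (simp add: assoc_mult_mat_vec[of _ n n _ n])
qed

lemma quadratic_form_coords:
  assumes x: "x \<in> carrier_vec n"
  shows "x \<bullet> (A *\<^sub>v x) = (\<Sum>i<n. d i * ((transpose_mat P *\<^sub>v x) $ i)\<^sup>2)"
proof -
  define y where "y = transpose_mat P *\<^sub>v x"
  have y: "y \<in> carrier_vec n" using transpose_P x by (simp add: y_def)
  have "x \<bullet> (A *\<^sub>v x) = y \<bullet> (mat_diag n d *\<^sub>v y)"
    using scalar_prod_coords[OF x] A x by (simp add: mult_vec_coords[OF x] y_def)
  also have "\<dots> = (\<Sum>i<n. y $ i * (mat_diag n d *\<^sub>v y) $ i)"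
  proof -
    have "dim_vec (mat_diag n d *\<^sub>v y) = n" by (simp add: mat_diag_def)
    then show ?thesis unfolding scalar_prod_def by (simp only: atLeast0LessThan)
  qed
  also have "\<dots> = (\<Sum>i<n. d i * (y $ i)\<^sup>2)"
    using y by (intro sum.cong) (simp_all add: index_mat_diag_mult_vec power2_eq_square)
  finally show ?thesis unfolding y_def .
qed

lemma norm_coords:
  assumes x: "x \<in> carrier_vec n"
  shows "x \<bullet> x = (\<Sum>i<n. ((transpose_mat P *\<^sub>v x) $ i)\<^sup>2)"
  using scalar_prod_coords[OF x x] transpose_P by (simp add: scalar_prod_def atLeast0LessThan power2_eq_square)

lemma rayleigh_le:
  assumes x: "x \<in> carrier_vec n"
  shows "x \<bullet> (A *\<^sub>v x) \<le> lambda_max A * (x \<bullet> x)"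
  unfolding quadratic_form_coords[OF x] norm_coords[OF x] sum_distrib_left
  by (intro sum_mono mult_right_mono le_lambda_max) auto

lemma eigenvector_coords:
  assumes u: "u \<in> carrier_vec n" and Au: "A *\<^sub>v u = k \<cdot>\<^sub>v u" and i: "i < n" "d i \<noteq> k"
  shows "(transpose_mat P *\<^sub>v u) $ i = 0"
proof -
  have "d i * (transpose_mat P *\<^sub>v u) $ i = (transpose_mat P *\<^sub>v (A *\<^sub>v u)) $ i"
    using transpose_P u i(1) by (simp add: mult_vec_coords index_mat_diag_mult_vec)
  also have "\<dots> = k * (transpose_mat P *\<^sub>v u) $ i"
    using transpose_P u i(1) by (simp add: Au mult_mat_vec)
  finally show ?thesis using i(2) by simp
qed

lemma simple_lambda_max_isolated:
  assumes "order (lambda_max A) (char_poly A) = 1"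
  shows "\<exists>i0 \<delta>. i0 < n \<and> d i0 = lambda_max A \<and> 0 < \<delta> \<and> (\<forall>i\<in>{..<n} - {i0}. d i \<le> lambda_max A - \<delta>)"
proof -
  let ?l = "lambda_max A"
  have "card {i. i < n \<and> d i = ?l} = 1" using assms order_char_poly by simp
  then obtain i0 where i0: "{i. i < n \<and> d i = ?l} = {i0}" by (meson card_1_singletonE)
  define S where "S = {..<n} - {i0}"
  have lt: "d i < ?l" if "i \<in> S" for i
    using that i0 le_lambda_max[of i] unfolding S_def by (metis (mono_tags) DiffE lessThan_iff mem_Collect_eq order_less_le)
  define \<delta> where "\<delta> = Min (insert 1 ((\<lambda>i. ?l - d i) ` S))"
  have "finite S" by (simp add: S_def)
  then have "0 < \<delta>" and "\<forall>i\<in>S. \<delta> \<le> ?l - d i"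
    unfolding \<delta>_def using lt by (auto simp: Min_gr_iff)
  then show ?thesis using i0 unfolding S_def by (intro exI[of _ i0] exI[of _ \<delta>]) force
qed

lemma quadratic_form_le_isolated:
  assumes i0: "i0 < n" "d i0 = l" and below: "\<forall>i\<in>{..<n} - {i0}. d i \<le> l - \<delta>"
    and x: "x \<in> carrier_vec n"
  shows "x \<bullet> (A *\<^sub>v x) \<le> l * (x \<bullet> x) - \<delta> * (x \<bullet> x - ((transpose_mat P *\<^sub>v x) $ i0)\<^sup>2)"
proof -
  define y where "y = transpose_mat P *\<^sub>v x"
  define S where "S = {..<n} - {i0}"
  have split: "(\<Sum>i<n. f i) = f i0 + (\<Sum>i\<in>S. f i)" for f :: "nat \<Rightarrow> real"
    unfolding S_def using i0(1) by (simp add: sum.remove)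
  have "(\<Sum>i\<in>S. d i * (y $ i)\<^sup>2) \<le> (\<Sum>i\<in>S. (l - \<delta>) * (y $ i)\<^sup>2)"
    using below unfolding S_def by (intro sum_mono mult_right_mono) auto
  then have "x \<bullet> (A *\<^sub>v x) \<le> l * (y $ i0)\<^sup>2 + (l - \<delta>) * (\<Sum>i\<in>S. (y $ i)\<^sup>2)"
    using quadratic_form_coords[OF x, folded y_def] i0(2) by (simp add: split sum_distrib_left)
  moreover have "x \<bullet> x = (y $ i0)\<^sup>2 + (\<Sum>i\<in>S. (y $ i)\<^sup>2)"
    using norm_coords[OF x, folded y_def] by (simp only: split)
  ultimately show ?thesis unfolding y_def[symmetric] by (simp add: algebra_simps)
qed

lemma projection_coords_isolated:
  assumes i0: "i0 < n" and u: "u \<in> carrier_vec n" "u \<noteq> 0\<^sub>v n"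
    and vanish: "\<forall>i\<in>{..<n} - {i0}. (transpose_mat P *\<^sub>v u) $ i = 0" and x: "x \<in> carrier_vec n"
  shows "(x \<bullet> u)\<^sup>2 / (u \<bullet> u) = ((transpose_mat P *\<^sub>v x) $ i0)\<^sup>2"
proof -
  define y where "y = transpose_mat P *\<^sub>v x"
  define z where "z = transpose_mat P *\<^sub>v u"
  have split: "(\<Sum>i<n. f i) = f i0" if "\<forall>i\<in>{..<n} - {i0}. f i = 0" for f :: "nat \<Rightarrow> real"
    using that i0 by (simp add: sum.remove)
  have y: "y \<in> carrier_vec n" and z: "z \<in> carrier_vec n"
    using transpose_P x u(1) by (simp_all add: y_def z_def)
  have "x \<bullet> u = (\<Sum>i<n. y $ i * z $ i)"
    using scalar_prod_coords[OF x u(1), folded y_def z_def] y z by (simp add: scalar_prod_def atLeast0LessThan)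
  then have xu: "x \<bullet> u = y $ i0 * z $ i0" using vanish by (simp add: split z_def)
  have uu: "u \<bullet> u = (z $ i0)\<^sup>2" using norm_coords[OF u(1), folded z_def] vanish by (simp add: split z_def)
  show ?thesis
    using real_scalar_prod_self_pos[OF u] unfolding y_def[symmetric] xu uu by (simp add: power_mult_distrib)
qed

text \<open>Here x \<bullet> x - (x \<bullet> u)^2 / (u \<bullet> u) is the squared distance of x from the line through u.\<close>

lemma spectral_gap:
  assumes simple: "order (lambda_max A) (char_poly A) = 1"
    and u: "u \<in> carrier_vec n" "u \<noteq> 0\<^sub>v n" and Au: "A *\<^sub>v u = lambda_max A \<cdot>\<^sub>v u"
  shows "\<exists>\<delta>>0. \<forall>x\<in>carrier_vec n.
           x \<bullet> (A *\<^sub>v x) \<le> lambda_max A * (x \<bullet> x) - \<delta> * (x \<bullet> x - (x \<bullet> u)\<^sup>2 / (u \<bullet> u))"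
proof -
  obtain i0 \<delta> where i0: "i0 < n" "d i0 = lambda_max A" and \<delta>: "0 < \<delta>"
    and below: "\<forall>i\<in>{..<n} - {i0}. d i \<le> lambda_max A - \<delta>"
    using simple_lambda_max_isolated[OF simple] by blast
  have "\<forall>i\<in>{..<n} - {i0}. (transpose_mat P *\<^sub>v u) $ i = 0"
    using below \<delta> by (force intro: eigenvector_coords[OF u(1) Au])
  then show ?thesis
    using quadratic_form_le_isolated[OF i0 below] projection_coords_isolated[OF i0(1) u] \<delta> by auto
qed

end

lemma real_symmetric_orthogonal_diagonalization:
  fixes A :: "real mat"
  assumes "A \<in> carrier_mat n n" and "transpose_mat A = A"
  obtains P d where "orthogonal_diagonalization A n P d"
  using real_symmetric_orthogonally_diagonalizable[OF assms] assms(1)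
  unfolding orthogonal_diagonalization_def by blast

lemma rayleigh_le_lambda_max:
  fixes A :: "real mat"
  assumes "A \<in> carrier_mat n n" and "transpose_mat A = A" and "x \<in> carrier_vec n"
  shows "x \<bullet> (A *\<^sub>v x) \<le> lambda_max A * (x \<bullet> x)"
  by (rule real_symmetric_orthogonal_diagonalization[OF assms(1,2)])
    (rule orthogonal_diagonalization.rayleigh_le[OF _ assms(3)])

lemma lambda_max_eigenvector_exists:
  fixes A :: "real mat"
  assumes A: "A \<in> carrier_mat n n" "transpose_mat A = A" and n: "0 < n"
  shows "\<exists>z. z \<in> carrier_vec n \<and> z \<noteq> 0\<^sub>v n \<and> A *\<^sub>v z = lambda_max A \<cdot>\<^sub>v z"
proof -
  obtain P d where diag: "orthogonal_diagonalization A n P d"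
    using real_symmetric_orthogonal_diagonalization[OF A] .
  have "eigenvalue A (lambda_max A)"
    using orthogonal_diagonalization.lambda_max_attained[OF diag n]
      orthogonal_diagonalization.eigenvalue_iff[OF diag] by blast
  then show ?thesis using A(1) unfolding eigenvalue_def eigenvector_def by auto
qed

lemma lambda_max_le_iff:
  fixes A :: "real mat"
  assumes A: "A \<in> carrier_mat n n" "transpose_mat A = A" and n: "0 < n"
  shows "lambda_max A \<le> l \<longleftrightarrow> (\<forall>z\<in>carrier_vec n. z \<bullet> (A *\<^sub>v z) \<le> l * (z \<bullet> z))"
proof
  assume "lambda_max A \<le> l"
  then show "\<forall>z\<in>carrier_vec n. z \<bullet> (A *\<^sub>v z) \<le> l * (z \<bullet> z)"
    using rayleigh_le_lambda_max[OF A] real_scalar_prod_self_nonneg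
    by (meson mult_right_mono order_trans)
next
  assume le: "\<forall>z\<in>carrier_vec n. z \<bullet> (A *\<^sub>v z) \<le> l * (z \<bullet> z)"
  obtain z where z: "z \<in> carrier_vec n" "z \<noteq> 0\<^sub>v n" "A *\<^sub>v z = lambda_max A \<cdot>\<^sub>v z"
    using lambda_max_eigenvector_exists[OF A n] by blast
  then have "lambda_max A * (z \<bullet> z) \<le> l * (z \<bullet> z)" using le by auto
  then show "lambda_max A \<le> l" using real_scalar_prod_self_pos[OF z(1,2)] by simp
qed

lemma simple_lambda_max_spectral_gap:
  fixes A :: "real mat"
  assumes A: "A \<in> carrier_mat n n" "transpose_mat A = A"
    and simple: "simple_eigenvalue A (lambda_max A)"
    and u: "u \<in> carrier_vec n" "u \<noteq> 0\<^sub>v n" and Au: "A *\<^sub>v u = lambda_max A \<cdot>\<^sub>v u"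
  shows "\<exists>\<delta>>0. \<forall>x\<in>carrier_vec n.
           x \<bullet> (A *\<^sub>v x) \<le> lambda_max A * (x \<bullet> x) - \<delta> * (x \<bullet> x - (x \<bullet> u)\<^sup>2 / (u \<bullet> u))"
proof -
  obtain P d where "orthogonal_diagonalization A n P d"
    using real_symmetric_orthogonal_diagonalization[OF A] .
  then show ?thesis
    using orthogonal_diagonalization.spectral_gap simple u Au unfolding simple_eigenvalue_def by blast
qed

lemma coord_diff_sq_le_residual:
  fixes z u :: "real vec"
  assumes z: "z \<in> carrier_vec n" and u: "u \<in> carrier_vec n" and uu: "0 < u \<bullet> u"
    and ij: "i < n" "j < n" "i \<noteq> j" and u0: "u $ i = 0" "u $ j = 0"
  shows "(z $ i - z $ j)\<^sup>2 \<le> 2 * (z \<bullet> z - (z \<bullet> u)\<^sup>2 / (u \<bullet> u))"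
proof -
  define t where "t = (z \<bullet> u) / (u \<bullet> u)"
  define p where "p = z - t \<cdot>\<^sub>v u"
  have p: "p \<in> carrier_vec n" using z u by (simp add: p_def)
  have "p \<bullet> p = z \<bullet> z - 2 * t * (z \<bullet> u) + t * t * (u \<bullet> u)"
    using z u by (simp add: p_def minus_scalar_prod_distrib[of _ n] scalar_prod_minus_distrib[of _ n]
        comm_scalar_prod[of u n z] algebra_simps)
  also have "\<dots> = z \<bullet> z - (z \<bullet> u)\<^sup>2 / (u \<bullet> u)"
    using uu by (simp add: t_def field_simps power2_eq_square)
  finally have pp: "p \<bullet> p = z \<bullet> z - (z \<bullet> u)\<^sup>2 / (u \<bullet> u)" .
  have pij: "p $ i = z $ i" "p $ j = z $ j" using z u ij u0 by (simp_all add: p_def)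
  have "(p $ i)\<^sup>2 + (p $ j)\<^sup>2 = (\<Sum>k\<in>{i, j}. (p $ k)\<^sup>2)" using ij by simp
  also have "\<dots> \<le> (\<Sum>k<n. (p $ k)\<^sup>2)" using ij by (intro sum_mono2) auto
  also have "\<dots> = p \<bullet> p" using p by (simp add: scalar_prod_def atLeast0LessThan power2_eq_square)
  finally have "(z $ i)\<^sup>2 + (z $ j)\<^sup>2 \<le> z \<bullet> z - (z \<bullet> u)\<^sup>2 / (u \<bullet> u)" unfolding pij pp .
  moreover have "(z $ i - z $ j)\<^sup>2 \<le> 2 * ((z $ i)\<^sup>2 + (z $ j)\<^sup>2)"
    using sum_squares_ge_zero[of "z $ i + z $ j" 0] by (simp add: power2_eq_square algebra_simps)
  ultimately show ?thesis by (meson mult_left_mono order_trans zero_le_numeral)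
qed

section \<open>Multiplex Laplacians\<close>

locale multiplex =
  fixes N :: nat and L1 L2 :: "real mat"
  assumes L1: "L1 \<in> carrier_mat N N" and L2: "L2 \<in> carrier_mat N N"
    and L1_symmetric: "transpose_mat L1 = L1" and L2_symmetric: "transpose_mat L2 = L2"
begin

abbreviation L :: "(nat \<Rightarrow> real) \<Rightarrow> real mat" where
  "L w \<equiv> multiplex_laplacian N L1 L2 w"

lemma L_carrier: "L w \<in> carrier_mat (N + N) (N + N)"
  unfolding multiplex_laplacian_def Let_def using L1 L2 by simp

lemma L_symmetric: "transpose_mat (L w) = L w"
proof -
  have W: "mat_diag N w \<in> carrier_mat N N" and WT: "transpose_mat (mat_diag N w) = mat_diag N w"
    by (auto intro!: eq_matI simp: mat_diag_def)
  show ?thesis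
    unfolding multiplex_laplacian_def Let_def
    using L1 L2 W by (simp add: transpose_four_block_mat[of _ N N _ N _ N] transpose_add[of _ N N]
        transpose_uminus WT L1_symmetric L2_symmetric)
qed

lemma L_mult_append:
  assumes x: "x \<in> carrier_vec N" and y: "y \<in> carrier_vec N"
  shows "L w *\<^sub>v (x @\<^sub>v y)
       = (L1 *\<^sub>v x + mat_diag N w *\<^sub>v (x - y)) @\<^sub>v (L2 *\<^sub>v y + mat_diag N w *\<^sub>v (y - x))"
proof -
  have W: "mat_diag N w \<in> carrier_mat N N" by simp
  have "L w *\<^sub>v (x @\<^sub>v y) = ((L1 + mat_diag N w) *\<^sub>v x + (- mat_diag N w) *\<^sub>v y)
      @\<^sub>v ((- mat_diag N w) *\<^sub>v x + (L2 + mat_diag N w) *\<^sub>v y)"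
    unfolding multiplex_laplacian_def Let_def
    by (rule four_block_mat_mult_vec[of _ N N _ N _ N]) (use L1 L2 W x y in auto)
  also have "\<dots> = (L1 *\<^sub>v x + mat_diag N w *\<^sub>v (x - y)) @\<^sub>v (L2 *\<^sub>v y + mat_diag N w *\<^sub>v (y - x))"
    using L1 L2 W x y by (intro arg_cong2[where f = append_vec] eq_vecI)
      (auto simp: algebra_simps scalar_prod_minus_distrib[of _ N] carrier_matD[OF W])
  finally show ?thesis .
qed

lemma L_quadratic_form:
  assumes x: "x \<in> carrier_vec N" and y: "y \<in> carrier_vec N"
  shows "(x @\<^sub>v y) \<bullet> (L w *\<^sub>v (x @\<^sub>v y))
       = x \<bullet> (L1 *\<^sub>v x) + y \<bullet> (L2 *\<^sub>v y) + (\<Sum>i<N. w i * (x $ i - y $ i)\<^sup>2)"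
proof -
  let ?W = "mat_diag N w"
  have xy: "x - y \<in> carrier_vec N" "y - x \<in> carrier_vec N" using x y by auto
  have W: "?W \<in> carrier_mat N N" by simp
  have "(x @\<^sub>v y) \<bullet> (L w *\<^sub>v (x @\<^sub>v y))
      = x \<bullet> (L1 *\<^sub>v x + ?W *\<^sub>v (x - y)) + y \<bullet> (L2 *\<^sub>v y + ?W *\<^sub>v (y - x))"
    unfolding L_mult_append[OF x y] by (rule scalar_prod_append)
      (use L1 L2 x y mult_mat_vec_carrier[OF W xy(1)] mult_mat_vec_carrier[OF W xy(2)] in auto)
  also have "\<dots> = x \<bullet> (L1 *\<^sub>v x) + y \<bullet> (L2 *\<^sub>v y) + (x \<bullet> (?W *\<^sub>v (x - y)) + y \<bullet> (?W *\<^sub>v (y - x)))"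
    using scalar_prod_add_distrib[OF x mult_mat_vec_carrier[OF L1 x] mult_mat_vec_carrier[OF W xy(1)]]
      scalar_prod_add_distrib[OF y mult_mat_vec_carrier[OF L2 y] mult_mat_vec_carrier[OF W xy(2)]]
    by simp
  also have "x \<bullet> (?W *\<^sub>v (x - y)) + y \<bullet> (?W *\<^sub>v (y - x)) = (\<Sum>i<N. w i * (x $ i - y $ i)\<^sup>2)"
  proof -
    have "x \<bullet> (?W *\<^sub>v (x - y)) + y \<bullet> (?W *\<^sub>v (y - x))
        = (\<Sum>i<N. x $ i * (w i * (x - y) $ i) + y $ i * (w i * (y - x) $ i))"
      using x y xy carrier_matD[OF W]
      by (simp add: scalar_prod_def atLeast0LessThan sum.distrib index_mat_diag_mult_vec del: index_mult_mat_vec)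
    also have "\<dots> = (\<Sum>i<N. w i * (x $ i - y $ i)\<^sup>2)"
      using x y by (intro sum.cong) (auto simp: power2_eq_square algebra_simps)
    finally show ?thesis .
  qed
  finally show ?thesis .
qed

lemma L_lambda_max_le_iff:
  assumes "0 < N"
  shows "lambda_max (L w) \<le> l \<longleftrightarrow> (\<forall>x\<in>carrier_vec N. \<forall>y\<in>carrier_vec N.
           x \<bullet> (L1 *\<^sub>v x) + y \<bullet> (L2 *\<^sub>v y) + (\<Sum>i<N. w i * (x $ i - y $ i)\<^sup>2) \<le> l * (x \<bullet> x + y \<bullet> y))"
proof -
  have split: "(\<forall>z\<in>carrier_vec (N + N). P z) \<longleftrightarrow> (\<forall>x\<in>carrier_vec N. \<forall>y\<in>carrier_vec N. P (x @\<^sub>v y))" for P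
    by (metis append_carrier_vec vec_first_carrier vec_first_last_append vec_last_carrier)
  have "0 < N + N" using assms by simp
  have "lambda_max (L w) \<le> l \<longleftrightarrow> (\<forall>z\<in>carrier_vec (N + N). z \<bullet> (L w *\<^sub>v z) \<le> l * (z \<bullet> z))"
    by (rule lambda_max_le_iff[OF L_carrier L_symmetric \<open>0 < N + N\<close>])
  also have "\<dots> \<longleftrightarrow> (\<forall>x\<in>carrier_vec N. \<forall>y\<in>carrier_vec N.
      (x @\<^sub>v y) \<bullet> (L w *\<^sub>v (x @\<^sub>v y)) \<le> l * ((x @\<^sub>v y) \<bullet> (x @\<^sub>v y)))"
    by (rule split)
  finally show ?thesis by (simp add: L_quadratic_form scalar_prod_append)
qed

end

section \<open>Concentrating the budget at a nodal vertex\<close>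

lemma real_continuation:
  fixes P :: "real \<Rightarrow> bool"
  assumes P0: "P 0" and "0 \<le> b"
    and down: "\<And>c c'. P c \<Longrightarrow> 0 \<le> c' \<Longrightarrow> c' \<le> c \<Longrightarrow> P c'"
    and closed: "\<And>c. 0 < c \<Longrightarrow> (\<And>c'. 0 \<le> c' \<Longrightarrow> c' < c \<Longrightarrow> P c') \<Longrightarrow> P c"
    and step: "\<And>c. 0 \<le> c \<Longrightarrow> c < b \<Longrightarrow> P c \<Longrightarrow> \<exists>c'>c. P c'"
  shows "P b"
proof (rule ccontr)
  assume not_b: "\<not> P b"
  define S where "S = {c. 0 \<le> c \<and> P c}"
  have below_b: "c < b" if "c \<in> S" for c
    using that not_b down[of c b] \<open>0 \<le> b\<close> unfolding S_def by force
  have "0 \<in> S" using P0 by (simp add: S_def)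
  have bdd: "bdd_above S" using below_b by (meson bdd_above.I less_imp_le)
  define s where "s = Sup S"
  have "0 \<le> s" unfolding s_def using \<open>0 \<in> S\<close> bdd by (rule cSup_upper)
  have "P s"
  proof (cases "s = 0")
    case False
    show ?thesis
    proof (rule closed)
      show "0 < s" using False \<open>0 \<le> s\<close> by simp
      fix c' assume "0 \<le> c'" "c' < s"
      then obtain c where "c \<in> S" "c' < c" using less_cSup_iff[OF _ bdd] \<open>0 \<in> S\<close> unfolding s_def by blast
      then show "P c'" using down \<open>0 \<le> c'\<close> unfolding S_def by force
    qed
  qed (use P0 in simp)
  then have "s < b" using below_b \<open>0 \<le> s\<close> by (simp add: S_def)
  then obtain c' where "c' > s" "P c'" using step \<open>0 \<le> s\<close> \<open>P s\<close> by blast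
  then have "c' \<in> S" using \<open>0 \<le> s\<close> by (simp add: S_def)
  then have "c' \<le> s" unfolding s_def using bdd by (rule cSup_upper)
  with \<open>c' > s\<close> show False by simp
qed

lemma affine_le_of_le_below:
  fixes a g K c :: real
  assumes "0 \<le> g" and "0 < c" and below: "\<And>c'. 0 \<le> c' \<Longrightarrow> c' < c \<Longrightarrow> a + c' * g \<le> K"
  shows "a + c * g \<le> K"
proof (cases "g = 0")
  case True
  then show ?thesis using below[of 0] \<open>0 < c\<close> by simp
next
  case False
  then have "0 < g" using \<open>0 \<le> g\<close> by simp
  have "c \<le> (K - a) / g"
  proof (rule dense_le_bounded[OF \<open>0 < c\<close>])
    fix c' assume "0 < c'" "c' < c"
    then show "c' \<le> (K - a) / g" using below[of c'] \<open>0 < g\<close> by (simp add: field_simps)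
  qed
  then show ?thesis using \<open>0 < g\<close> by (simp add: field_simps)
qed

definition point_weight :: "nat \<Rightarrow> real \<Rightarrow> nat \<Rightarrow> real" where
  "point_weight x0 c = (\<lambda>i. if i = x0 then c else 0)"

lemma sum_point_weight:
  "x0 < N \<Longrightarrow> (\<Sum>i<N. point_weight x0 c i * f i) = c * f x0"
proof -
  assume "x0 < N"
  have "(\<Sum>i<N. point_weight x0 c i * f i) = (\<Sum>i<N. if i = x0 then c * f i else 0)"
    by (rule sum.cong) (auto simp: point_weight_def)
  then show ?thesis using \<open>x0 < N\<close> by simp
qed

locale dominant_layer = multiplex +
  fixes v :: "real vec"
  assumes v: "v \<in> carrier_vec N" "v \<noteq> 0\<^sub>v N"
    and L1_v: "L1 *\<^sub>v v = lambda_max L1 \<cdot>\<^sub>v v"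
    and dominant: "lambda_max L2 < lambda_max L1"
begin

abbreviation lam1 :: real where "lam1 \<equiv> lambda_max L1"

lemma N_pos: "0 < N"
  using v by (metis carrier_vecD eq_vecI less_nat_zero_code neq0_conv index_zero_vec(2))

lemma vv_pos: "0 < v \<bullet> v"
  using real_scalar_prod_self_pos[OF v] .

lemma rayleigh_at_v: "lam1 * (v \<bullet> v) + (\<Sum>i<N. w i * (v $ i)\<^sup>2) \<le> lambda_max (L w) * (v \<bullet> v)"
proof -
  have "(v @\<^sub>v 0\<^sub>v N) \<bullet> (L w *\<^sub>v (v @\<^sub>v 0\<^sub>v N)) = lam1 * (v \<bullet> v) + (\<Sum>i<N. w i * (v $ i)\<^sup>2)"
    using v L2 by (simp add: L_quadratic_form L1_v)
  moreover have "(v @\<^sub>v 0\<^sub>v N) \<bullet> (v @\<^sub>v 0\<^sub>v N) = v \<bullet> v"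
    using scalar_prod_append[OF v(1) zero_carrier_vec v(1) zero_carrier_vec] by simp
  ultimately show ?thesis
    using rayleigh_le_lambda_max[OF L_carrier L_symmetric, of "v @\<^sub>v 0\<^sub>v N" w] v by simp
qed

lemma lam1_le_lambda_max_L:
  assumes "\<forall>i<N. 0 \<le> w i"
  shows "lam1 \<le> lambda_max (L w)"
proof -
  have "0 \<le> (\<Sum>i<N. w i * (v $ i)\<^sup>2)" using assms by (intro sum_nonneg) auto
  then have "lam1 * (v \<bullet> v) \<le> lambda_max (L w) * (v \<bullet> v)" using rayleigh_at_v[of w] by linarith
  then show ?thesis using vv_pos by (simp add: mult_le_cancel_right)
qed

lemma weight_vanishes_on_v:
  assumes w: "\<forall>i<N. 0 \<le> w i" and le: "lambda_max (L w) \<le> lam1"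
  shows "\<forall>i<N. w i * v $ i = 0"
proof -
  have "lambda_max (L w) * (v \<bullet> v) \<le> lam1 * (v \<bullet> v)" using le vv_pos by simp
  then have "(\<Sum>i<N. w i * (v $ i)\<^sup>2) \<le> 0" using rayleigh_at_v[of w] by linarith
  moreover have "0 \<le> (\<Sum>i<N. w i * (v $ i)\<^sup>2)" using w by (intro sum_nonneg) auto
  ultimately have "(\<Sum>i<N. w i * (v $ i)\<^sup>2) = 0" by linarith
  then have "\<forall>i\<in>{..<N}. w i * (v $ i)\<^sup>2 = 0"
    using w by (subst sum_nonneg_eq_0_iff[symmetric]) auto
  then show ?thesis by (simp add: power2_eq_square)
qed

lemma lambda_star_eq_if_attained:
  assumes adm: "admissible_weight N c w" and le: "lambda_max (L w) \<le> lam1"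
  shows "lambda_star N L1 L2 c = lam1" and "optimal_weight N L1 L2 c w"
proof -
  have ge: "lam1 \<le> lambda_max (L w')" if "admissible_weight N c w'" for w'
    using that lam1_le_lambda_max_L unfolding admissible_weight_def by blast
  have eq: "lambda_max (L w) = lam1" using le ge[OF adm] by simp
  show star: "lambda_star N L1 L2 c = lam1"
    unfolding lambda_star_def
  proof (rule cInf_eq_minimum)
    show "lam1 \<in> {lambda_max (L w) |w. admissible_weight N c w}"
      using adm eq[symmetric] by (intro CollectI exI[of _ w] conjI)
  next
    fix y assume "y \<in> {lambda_max (L w) |w. admissible_weight N c w}"
    then show "lam1 \<le> y" using ge by blast
  qed
  show "optimal_weight N L1 L2 c w" using adm eq star by (simp add: optimal_weight_def)
qed

lemma L_eigenvector_v:
  assumes "\<forall>i<N. w i * v $ i = 0"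
  shows "L w *\<^sub>v (v @\<^sub>v 0\<^sub>v N) = lam1 \<cdot>\<^sub>v (v @\<^sub>v 0\<^sub>v N)"
proof -
  have Wv: "mat_diag N w *\<^sub>v v = 0\<^sub>v N" by (rule mat_diag_mult_vec_eq_zero[OF v(1) assms])
  have L2_0: "L2 *\<^sub>v 0\<^sub>v N = 0\<^sub>v N" by (rule eq_vecI) (use L2 in auto)
  have "L w *\<^sub>v (v @\<^sub>v 0\<^sub>v N) = (lam1 \<cdot>\<^sub>v v) @\<^sub>v 0\<^sub>v N"
    using v(1) Wv L2_0 by (simp add: L_mult_append L1_v mult_mat_vec_uminus[OF mat_diag_dim])
  also have "\<dots> = lam1 \<cdot>\<^sub>v (v @\<^sub>v 0\<^sub>v N)"
    by (rule eq_vecI) (use v(1) in auto)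
  finally show ?thesis .
qed

lemma point_weight_admissible: "x0 < N \<Longrightarrow> 0 \<le> c \<Longrightarrow> admissible_weight N c (point_weight x0 c)"
  using sum_point_weight[of x0 N c "\<lambda>_. 1"] by (simp add: admissible_weight_def point_weight_def)

lemma point_weight_le_iff:
  assumes "x0 < N"
  shows "lambda_max (L (point_weight x0 c)) \<le> lam1 \<longleftrightarrow> (\<forall>x\<in>carrier_vec N. \<forall>y\<in>carrier_vec N.
           x \<bullet> (L1 *\<^sub>v x) + y \<bullet> (L2 *\<^sub>v y) + c * (x $ x0 - y $ x0)\<^sup>2 \<le> lam1 * (x \<bullet> x + y \<bullet> y))"
  using L_lambda_max_le_iff[OF N_pos] sum_point_weight[OF assms] by simp

lemma point_weight_zero:
  assumes "x0 < N"
  shows "lambda_max (L (point_weight x0 0)) \<le> lam1"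
  unfolding point_weight_le_iff[OF assms]
proof (intro ballI)
  fix x y :: "real vec" assume x: "x \<in> carrier_vec N" and y: "y \<in> carrier_vec N"
  have "y \<bullet> (L2 *\<^sub>v y) \<le> lambda_max L2 * (y \<bullet> y)"
    by (rule rayleigh_le_lambda_max[OF L2 L2_symmetric y])
  also have "\<dots> \<le> lam1 * (y \<bullet> y)"
    using dominant real_scalar_prod_self_nonneg[of y] by (simp add: mult_right_mono)
  finally show "x \<bullet> (L1 *\<^sub>v x) + y \<bullet> (L2 *\<^sub>v y) + 0 * (x $ x0 - y $ x0)\<^sup>2 \<le> lam1 * (x \<bullet> x + y \<bullet> y)"
    using rayleigh_le_lambda_max[OF L1 L1_symmetric x] by (simp add: distrib_left)
qed

lemma point_weight_antimono:
  assumes "x0 < N" and "lambda_max (L (point_weight x0 c)) \<le> lam1" and "c' \<le> c"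
  shows "lambda_max (L (point_weight x0 c')) \<le> lam1"
proof -
  have "c' * (x $ x0 - y $ x0)\<^sup>2 \<le> c * (x $ x0 - y $ x0)\<^sup>2" for x y :: "real vec"
    using \<open>c' \<le> c\<close> by (simp add: mult_right_mono)
  then show ?thesis using assms(2) unfolding point_weight_le_iff[OF assms(1)] by (meson add_left_mono order_trans)
qed

lemma point_weight_closed:
  assumes "x0 < N" and "0 < c"
    and below: "\<And>c'. 0 \<le> c' \<Longrightarrow> c' < c \<Longrightarrow> lambda_max (L (point_weight x0 c')) \<le> lam1"
  shows "lambda_max (L (point_weight x0 c)) \<le> lam1"
  unfolding point_weight_le_iff[OF assms(1)]
proof (intro ballI)
  fix x y :: "real vec" assume "x \<in> carrier_vec N" "y \<in> carrier_vec N"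
  show "x \<bullet> (L1 *\<^sub>v x) + y \<bullet> (L2 *\<^sub>v y) + c * (x $ x0 - y $ x0)\<^sup>2 \<le> lam1 * (x \<bullet> x + y \<bullet> y)"
  proof (rule affine_le_of_le_below[OF _ \<open>0 < c\<close>])
    fix c' assume "0 \<le> c'" "c' < c"
    then show "x \<bullet> (L1 *\<^sub>v x) + y \<bullet> (L2 *\<^sub>v y) + c' * (x $ x0 - y $ x0)\<^sup>2 \<le> lam1 * (x \<bullet> x + y \<bullet> y)"
      using below \<open>x \<in> carrier_vec N\<close> \<open>y \<in> carrier_vec N\<close> unfolding point_weight_le_iff[OF assms(1)] by blast
  qed simp
qed

lemma point_weight_spectral_gap:
  assumes x0: "x0 < N" "v $ x0 = 0" and c: "0 \<le> c"
    and le: "lambda_max (L (point_weight x0 c)) \<le> lam1"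
    and simple: "simple_eigenvalue (L (point_weight x0 c)) lam1"
  shows "\<exists>\<delta>>0. \<forall>x\<in>carrier_vec N. \<forall>y\<in>carrier_vec N.
           x \<bullet> (L1 *\<^sub>v x) + y \<bullet> (L2 *\<^sub>v y) + c * (x $ x0 - y $ x0)\<^sup>2
           \<le> lam1 * (x \<bullet> x + y \<bullet> y) - \<delta> * (x \<bullet> x + y \<bullet> y - (x \<bullet> v)\<^sup>2 / (v \<bullet> v))"
proof -
  let ?w = "point_weight x0 c"
  define u where "u = v @\<^sub>v 0\<^sub>v N"
  have u_prod: "(x @\<^sub>v y) \<bullet> u = x \<bullet> v" if "x \<in> carrier_vec N" "y \<in> carrier_vec N" for x y
    using scalar_prod_append[OF that v(1) zero_carrier_vec] that by (simp add: u_def)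
  have u: "u \<in> carrier_vec (N + N)" "u \<noteq> 0\<^sub>v (N + N)"
    using v(1) u_prod[OF v(1) zero_carrier_vec] vv_pos by (auto simp: u_def)
  have eq: "lambda_max (L ?w) = lam1"
    using le lam1_le_lambda_max_L[of ?w] c by (auto simp: point_weight_def)
  have Lu: "L ?w *\<^sub>v u = lambda_max (L ?w) \<cdot>\<^sub>v u"
    using L_eigenvector_v[of ?w] x0(2) eq by (simp add: u_def point_weight_def)
  obtain \<delta> where \<delta>: "0 < \<delta>" and gap: "\<forall>z\<in>carrier_vec (N + N).
      z \<bullet> (L ?w *\<^sub>v z) \<le> lambda_max (L ?w) * (z \<bullet> z) - \<delta> * (z \<bullet> z - (z \<bullet> u)\<^sup>2 / (u \<bullet> u))"
    using simple_lambda_max_spectral_gap[OF L_carrier L_symmetric _ u Lu] simple eq by auto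
  show ?thesis
  proof (intro exI[of _ \<delta>] conjI \<delta> ballI)
    fix x y :: "real vec" assume x: "x \<in> carrier_vec N" and y: "y \<in> carrier_vec N"
    have "(x @\<^sub>v y) \<bullet> (x @\<^sub>v y) = x \<bullet> x + y \<bullet> y" using scalar_prod_append[OF x y x y] by simp
    moreover have "(x @\<^sub>v y) \<bullet> (L ?w *\<^sub>v (x @\<^sub>v y)) \<le> lam1 * ((x @\<^sub>v y) \<bullet> (x @\<^sub>v y))
        - \<delta> * ((x @\<^sub>v y) \<bullet> (x @\<^sub>v y) - ((x @\<^sub>v y) \<bullet> u)\<^sup>2 / (u \<bullet> u))"
      using gap x y eq by simp
    ultimately show "x \<bullet> (L1 *\<^sub>v x) + y \<bullet> (L2 *\<^sub>v y) + c * (x $ x0 - y $ x0)\<^sup>2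
        \<le> lam1 * (x \<bullet> x + y \<bullet> y) - \<delta> * (x \<bullet> x + y \<bullet> y - (x \<bullet> v)\<^sup>2 / (v \<bullet> v))"
      using u_prod[OF x y] u_prod[OF v(1) zero_carrier_vec]
      by (simp add: L_quadratic_form[OF x y] sum_point_weight[OF x0(1)] u_def)
  qed
qed

lemma nodal_coord_diff_sq_le:
  assumes x0: "x0 < N" "v $ x0 = 0" and x: "x \<in> carrier_vec N" and y: "y \<in> carrier_vec N"
  shows "(x $ x0 - y $ x0)\<^sup>2 \<le> 2 * (x \<bullet> x + y \<bullet> y - (x \<bullet> v)\<^sup>2 / (v \<bullet> v))"
proof -
  have u: "v @\<^sub>v 0\<^sub>v N \<in> carrier_vec (N + N)" and z: "x @\<^sub>v y \<in> carrier_vec (N + N)"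
    using v(1) x y by auto
  have "((x @\<^sub>v y) $ x0 - (x @\<^sub>v y) $ (x0 + N))\<^sup>2
      \<le> 2 * ((x @\<^sub>v y) \<bullet> (x @\<^sub>v y) - ((x @\<^sub>v y) \<bullet> (v @\<^sub>v 0\<^sub>v N))\<^sup>2 / ((v @\<^sub>v 0\<^sub>v N) \<bullet> (v @\<^sub>v 0\<^sub>v N)))"
    using x0 v(1) vv_pos scalar_prod_append[OF v(1) zero_carrier_vec v(1) zero_carrier_vec]
    by (intro coord_diff_sq_le_residual[OF z u]) auto
  then show ?thesis
    using x0(1) x y scalar_prod_append[OF x y x y] scalar_prod_append[OF x y v(1) zero_carrier_vec]
      scalar_prod_append[OF v(1) zero_carrier_vec v(1) zero_carrier_vec] by simp
qed

lemma point_weight_extend: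
  assumes x0: "x0 < N" "v $ x0 = 0" and c: "0 \<le> c"
    and le: "lambda_max (L (point_weight x0 c)) \<le> lam1"
    and simple: "simple_eigenvalue (L (point_weight x0 c)) lam1"
  shows "\<exists>c'>c. lambda_max (L (point_weight x0 c')) \<le> lam1"
proof -
  obtain \<delta> where \<delta>: "0 < \<delta>" and gap: "\<forall>x\<in>carrier_vec N. \<forall>y\<in>carrier_vec N.
      x \<bullet> (L1 *\<^sub>v x) + y \<bullet> (L2 *\<^sub>v y) + c * (x $ x0 - y $ x0)\<^sup>2
      \<le> lam1 * (x \<bullet> x + y \<bullet> y) - \<delta> * (x \<bullet> x + y \<bullet> y - (x \<bullet> v)\<^sup>2 / (v \<bullet> v))"
    using point_weight_spectral_gap[OF assms] by blast
  have "lambda_max (L (point_weight x0 (c + \<delta> / 2))) \<le> lam1"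
    unfolding point_weight_le_iff[OF x0(1)]
  proof (intro ballI)
    fix x y :: "real vec" assume x: "x \<in> carrier_vec N" and y: "y \<in> carrier_vec N"
    have "\<delta> / 2 * (x $ x0 - y $ x0)\<^sup>2 \<le> \<delta> / 2 * (2 * (x \<bullet> x + y \<bullet> y - (x \<bullet> v)\<^sup>2 / (v \<bullet> v)))"
      using \<delta> by (intro mult_left_mono nodal_coord_diff_sq_le[OF x0 x y]) simp
    also have "\<dots> = \<delta> * (x \<bullet> x + y \<bullet> y - (x \<bullet> v)\<^sup>2 / (v \<bullet> v))" by simp
    finally have "\<delta> / 2 * (x $ x0 - y $ x0)\<^sup>2 \<le> \<delta> * (x \<bullet> x + y \<bullet> y - (x \<bullet> v)\<^sup>2 / (v \<bullet> v))" .
    moreover have "(c + \<delta> / 2) * (x $ x0 - y $ x0)\<^sup>2 = c * (x $ x0 - y $ x0)\<^sup>2 + \<delta> / 2 * (x $ x0 - y $ x0)\<^sup>2"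
      by (rule distrib_right)
    ultimately show "x \<bullet> (L1 *\<^sub>v x) + y \<bullet> (L2 *\<^sub>v y) + (c + \<delta> / 2) * (x $ x0 - y $ x0)\<^sup>2
        \<le> lam1 * (x \<bullet> x + y \<bullet> y)"
      using gap x y by fastforce
  qed
  then show ?thesis using \<delta> by (intro exI[of _ "c + \<delta> / 2"]) auto
qed

lemma lambda_star_eq_lam1:
  assumes x0: "x0 < N" "v $ x0 = 0" and "0 \<le> c1"
    and simple_below: "\<forall>c. 0 \<le> c \<and> c < c1 \<longrightarrow> optimal_simple N L1 L2 c"
  shows "lambda_star N L1 L2 c1 = lam1"
proof -
  have "lambda_max (L (point_weight x0 c1)) \<le> lam1"
  proof (rule real_continuation[where P = "\<lambda>c. lambda_max (L (point_weight x0 c)) \<le> lam1"])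
    show "lambda_max (L (point_weight x0 0)) \<le> lam1" by (rule point_weight_zero[OF x0(1)])
    show "0 \<le> c1" by fact
  next
    fix c c' assume "lambda_max (L (point_weight x0 c)) \<le> lam1" "0 \<le> c'" "c' \<le> c"
    then show "lambda_max (L (point_weight x0 c')) \<le> lam1" using point_weight_antimono[OF x0(1)] by blast
  next
    fix c assume "0 < c" "\<And>c'. 0 \<le> c' \<Longrightarrow> c' < c \<Longrightarrow> lambda_max (L (point_weight x0 c')) \<le> lam1"
    then show "lambda_max (L (point_weight x0 c)) \<le> lam1" by (rule point_weight_closed[OF x0(1)])
  next
    fix c assume c: "0 \<le> c" "c < c1" and le: "lambda_max (L (point_weight x0 c)) \<le> lam1"
    have opt: "optimal_weight N L1 L2 c (point_weight x0 c)" and star: "lambda_star N L1 L2 c = lam1"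
      using lambda_star_eq_if_attained[OF point_weight_admissible[OF x0(1) c(1)] le] by blast+
    have "optimal_simple N L1 L2 c" using simple_below c by blast
    then have "simple_eigenvalue (L (point_weight x0 c)) lam1"
      using opt star unfolding optimal_simple_def by metis
    then show "\<exists>c'>c. lambda_max (L (point_weight x0 c')) \<le> lam1"
      by (rule point_weight_extend[OF x0 c(1) le])
  qed
  then show ?thesis
    by (rule lambda_star_eq_if_attained(1)[OF point_weight_admissible[OF x0(1) \<open>0 \<le> c1\<close>]])
qed

lemma optimal_weight_vanishes_on_v:
  assumes x0: "x0 < N" "v $ x0 = 0" and "0 \<le> c1"
    and simple_below: "\<forall>c. 0 \<le> c \<and> c < c1 \<longrightarrow> optimal_simple N L1 L2 c"
    and opt: "optimal_weight N L1 L2 c1 w"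
  shows "\<forall>i<N. w i * v $ i = 0"
  using opt weight_vanishes_on_v[of w] lambda_star_eq_lam1[OF assms(1-4)]
  unfolding optimal_weight_def admissible_weight_def by simp

end

section \<open>The Schur complement Q\<close>

lemma smult_mat_mult_vec:
  fixes A :: "'a::comm_ring_1 mat"
  assumes "A \<in> carrier_mat nr nc" and "x \<in> carrier_vec nc"
  shows "(k \<cdot>\<^sub>m A) *\<^sub>v x = k \<cdot>\<^sub>v (A *\<^sub>v x)"
  by (rule eq_vecI) (use assms in \<open>auto simp: row_smult[of _ A] smult_scalar_prod_distrib[of _ nc]\<close>)

lemma pinv_eq_inverse:
  fixes A B :: "real mat"
  assumes A: "A \<in> carrier_mat n n" and B: "B \<in> carrier_mat n n"
    and BA: "B * A = 1\<^sub>m n" and AB: "A * B = 1\<^sub>m n"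
  shows "pinv A = B"
  unfolding pinv_def
proof (rule the_equality)
  show "B \<in> carrier_mat (dim_col A) (dim_row A) \<and> A * B * A = A \<and> B * A * B = B \<and>
        transpose_mat (A * B) = A * B \<and> transpose_mat (B * A) = B * A"
    using A B AB BA by simp
next
  fix X assume X: "X \<in> carrier_mat (dim_col A) (dim_row A) \<and> A * X * A = A \<and> X * A * X = X \<and>
        transpose_mat (A * X) = A * X \<and> transpose_mat (X * A) = X * A"
  then have Xc: "X \<in> carrier_mat n n" and AXA: "A * X * A = A" using A by auto
  have "X = (B * A) * X * (A * B)" using Xc by (simp add: AB BA)
  also have "\<dots> = B * (A * X * A) * B" using A B Xc by (simp add: assoc_mult_mat[of _ n n _ n _ n])
  also have "\<dots> = B" using B by (simp add: AXA BA)
  finally show "X = B" .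
qed

lemma definite_mat_invertible:
  fixes A :: "real mat"
  assumes A: "A \<in> carrier_mat n n"
    and definite: "\<And>x. x \<in> carrier_vec n \<Longrightarrow> x \<noteq> 0\<^sub>v n \<Longrightarrow> x \<bullet> (A *\<^sub>v x) \<noteq> 0"
  shows "\<exists>B\<in>carrier_mat n n. B * A = 1\<^sub>m n \<and> A * B = 1\<^sub>m n"
proof -
  have "det A \<noteq> 0"
    unfolding det_0_iff_vec_prod_zero[OF A] using definite by fastforce
  from det_non_zero_imp_unit[OF A this, of "()"]
  show ?thesis unfolding Units_def ring_mat_def by auto
qed

lemma schur_complement_mult_vec_eq_zero:
  fixes A B C :: "real mat"
  assumes A: "A \<in> carrier_mat n n" and B: "B \<in> carrier_mat n n" and C: "C \<in> carrier_mat n n"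
    and BA: "B * A = 1\<^sub>m n" and v: "v \<in> carrier_vec n" and Cv: "C *\<^sub>v v = - (A *\<^sub>v v)"
  shows "(A - C * B * C) *\<^sub>v v = 0\<^sub>v n"
proof -
  have "B *\<^sub>v (C *\<^sub>v v) = - ((B * A) *\<^sub>v v)"
    unfolding Cv using A B v by (simp add: mult_mat_vec_uminus[OF B] assoc_mult_mat_vec[of _ n n _ n])
  then have BCv: "B *\<^sub>v (C *\<^sub>v v) = - v" using v by (simp add: BA)
  have "(C * B * C) *\<^sub>v v = C *\<^sub>v (B *\<^sub>v (C *\<^sub>v v))"
    using A B C v by (simp add: assoc_mult_mat_vec[of _ n n _ n])
  also have "\<dots> = A *\<^sub>v v" unfolding BCv using A C v by (simp add: mult_mat_vec_uminus[OF C] Cv)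
  finally show ?thesis
    using A B C v by (simp add: minus_mult_distrib_mat_vec[of _ n n])
qed

lemma eigenvalue_zero_add_mat_diag:
  fixes M :: "real mat"
  assumes M: "M \<in> carrier_mat n n" and v: "v \<in> carrier_vec n" "v \<noteq> 0\<^sub>v n"
    and Mv: "M *\<^sub>v v = 0\<^sub>v n" and vanish: "\<forall>i<n. w i * v $ i = 0"
  shows "eigenvalue (M + k \<cdot>\<^sub>m mat_diag n w) 0"
proof -
  have "(M + k \<cdot>\<^sub>m mat_diag n w) *\<^sub>v v = 0 \<cdot>\<^sub>v v"
    using M v(1) Mv mat_diag_mult_vec_eq_zero[OF v(1) vanish]
    by (auto simp: add_mult_distrib_mat_vec[of _ n n] smult_mat_mult_vec[of _ n n] intro!: eq_vecI)
  then have "eigenvector (M + k \<cdot>\<^sub>m mat_diag n w) v 0"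
    using M v unfolding eigenvector_def by (simp add: mat_diag_def)
  then show ?thesis unfolding eigenvalue_def by blast
qed

context dominant_layer
begin

abbreviation Lbar :: "real mat" where
  "Lbar \<equiv> (1/2) \<cdot>\<^sub>m (L1 + L2) - lam1 \<cdot>\<^sub>m 1\<^sub>m N"

abbreviation Ltil :: "real mat" where
  "Ltil \<equiv> (1/2) \<cdot>\<^sub>m (L1 - L2)"

lemma Lbar_carrier: "Lbar \<in> carrier_mat N N"
  using L1 L2 by (intro minus_carrier_mat smult_carrier_mat add_carrier_mat) auto

lemma Ltil_carrier: "Ltil \<in> carrier_mat N N"
  using L1 L2 by (intro smult_carrier_mat minus_carrier_mat)

lemma Lbar_mult_vec:
  assumes x: "x \<in> carrier_vec N"
  shows "Lbar *\<^sub>v x = (1/2) \<cdot>\<^sub>v (L1 *\<^sub>v x + L2 *\<^sub>v x) - lam1 \<cdot>\<^sub>v x"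
  using L1 L2 x by (simp add: minus_mult_distrib_mat_vec[of _ N N] smult_mat_mult_vec[of _ N N]
      add_mult_distrib_mat_vec[of _ N N])

lemma Ltil_mult_vec:
  assumes x: "x \<in> carrier_vec N"
  shows "Ltil *\<^sub>v x = (1/2) \<cdot>\<^sub>v (L1 *\<^sub>v x - L2 *\<^sub>v x)"
proof -
  have "L1 - L2 \<in> carrier_mat N N" using L2 by (rule minus_carrier_mat)
  then show ?thesis
    using L1 L2 x by (simp add: smult_mat_mult_vec[of _ N N] minus_mult_distrib_mat_vec[of _ N N])
qed

lemma Lbar_negative_definite:
  assumes x: "x \<in> carrier_vec N" "x \<noteq> 0\<^sub>v N"
  shows "x \<bullet> (Lbar *\<^sub>v x) < 0"
proof -
  have "x \<bullet> (Lbar *\<^sub>v x) = (1/2) * (x \<bullet> (L1 *\<^sub>v x)) + (1/2) * (x \<bullet> (L2 *\<^sub>v x)) - lam1 * (x \<bullet> x)"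
    using L1 L2 x by (simp add: Lbar_mult_vec scalar_prod_minus_distrib[of _ N] scalar_prod_add_distrib[of _ N])
  also have "\<dots> \<le> (1/2) * (lam1 * (x \<bullet> x)) + (1/2) * (lambda_max L2 * (x \<bullet> x)) - lam1 * (x \<bullet> x)"
    using rayleigh_le_lambda_max[OF L1 L1_symmetric x(1)] rayleigh_le_lambda_max[OF L2 L2_symmetric x(1)]
    by simp
  also have "\<dots> < 0"
    using dominant real_scalar_prod_self_pos[OF x] by (simp add: algebra_simps)
  finally show ?thesis .
qed

lemma Ltil_v: "Ltil *\<^sub>v v = - (Lbar *\<^sub>v v)"
  using v(1) L2 by (auto intro!: eq_vecI simp: Lbar_mult_vec Ltil_mult_vec L1_v algebra_simps)

lemma schur_complement_annihilates_v:
  shows "Lbar - Ltil * pinv Lbar * Ltil \<in> carrier_mat N N"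
    and "(Lbar - Ltil * pinv Lbar * Ltil) *\<^sub>v v = 0\<^sub>v N"
proof -
  obtain B where B: "B \<in> carrier_mat N N" "B * Lbar = 1\<^sub>m N" "Lbar * B = 1\<^sub>m N"
    using definite_mat_invertible[OF Lbar_carrier] Lbar_negative_definite by fastforce
  have pinv: "pinv Lbar = B" by (rule pinv_eq_inverse[OF Lbar_carrier B])
  show "Lbar - Ltil * pinv Lbar * Ltil \<in> carrier_mat N N"
    unfolding pinv using Lbar_carrier Ltil_carrier B(1) by (intro minus_carrier_mat mult_carrier_mat)
  show "(Lbar - Ltil * pinv Lbar * Ltil) *\<^sub>v v = 0\<^sub>v N"
    unfolding pinv by (rule schur_complement_mult_vec_eq_zero[OF Lbar_carrier B(1) Ltil_carrier B(2) v(1) Ltil_v])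
qed

end

lemma graph_laplacian_carrier: "graph_laplacian N E \<in> carrier_mat N N"
  by (simp add: graph_laplacian_def)

lemma graph_laplacian_symmetric:
  assumes "simple_graph N E"
  shows "transpose_mat (graph_laplacian N E) = graph_laplacian N E"
  using assms by (intro eq_matI) (auto simp: graph_laplacian_def simple_graph_def)

theorem mainTheorem6:
  fixes N :: nat and E1 E2 :: "nat \<Rightarrow> nat \<Rightarrow> bool"
    and v :: "real vec" and c1 :: real and wstar :: "nat \<Rightarrow> real"
  defines "L1 \<equiv> graph_laplacian N E1"
      and "L2 \<equiv> graph_laplacian N E2"
  defines "lam1 \<equiv> lambda_max L1"
  defines "Lbar \<equiv> (1/2) \<cdot>\<^sub>m (L1 + L2) - lam1 \<cdot>\<^sub>m 1\<^sub>m N"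
      and "Ltil \<equiv> (1/2) \<cdot>\<^sub>m (L1 - L2)"
  defines "Q \<equiv> Lbar - Ltil * pinv Lbar * Ltil"
  assumes G1: "simple_graph N E1" and G2: "simple_graph N E2"
    and gt: "lambda_max L1 > lambda_max L2"
    and simple1: "simple_eigenvalue L1 lam1"
    and ev: "eigenvector L1 v lam1"
    and nodal: "\<exists>x<N. v $ x = 0"
    and c1_pos: "c1 > 0"
    and c1_simple: "\<forall>c. 0 \<le> c \<and> c < c1 \<longrightarrow> optimal_simple N L1 L2 c"
    and c1_largest: "\<forall>d > c1. \<exists>c. c1 \<le> c \<and> c < d \<and> \<not> optimal_simple N L1 L2 c"
    and opt: "optimal_weight N L1 L2 c1 wstar"
  shows "eigenvalue (Q + 2 \<cdot>\<^sub>m mat_diag N wstar) 0"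
proof -
  have L1: "L1 \<in> carrier_mat N N" and L2: "L2 \<in> carrier_mat N N"
    unfolding L1_def L2_def by (rule graph_laplacian_carrier)+
  have v: "v \<in> carrier_vec N" "v \<noteq> 0\<^sub>v N" "L1 *\<^sub>v v = lambda_max L1 \<cdot>\<^sub>v v"
    using ev L1 unfolding eigenvector_def lam1_def by auto
  interpret dl: dominant_layer N L1 L2 v
    using L1 L2 v gt graph_laplacian_symmetric[OF G1] graph_laplacian_symmetric[OF G2]
    unfolding L1_def L2_def by unfold_locales auto
  obtain x0 where x0: "x0 < N" "v $ x0 = 0" using nodal by blast
  have "\<forall>i<N. wstar i * v $ i = 0"
    using dl.optimal_weight_vanishes_on_v[OF x0 _ c1_simple opt] c1_pos by simp
  moreover have "Q = dl.Lbar - dl.Ltil * pinv dl.Lbar * dl.Ltil"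
    unfolding Q_def Lbar_def Ltil_def lam1_def ..
  ultimately show ?thesis
    using eigenvalue_zero_add_mat_diag[OF dl.schur_complement_annihilates_v(1) v(1,2)
        dl.schur_complement_annihilates_v(2)] by simp
qed

end
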